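(* For any two pre-subgroups $f,f'$ of $V$ there exist pre-subgroups $g,g'$ with $H^f\cap H^{f'}=H^g$ and $H_f\cap H_{f'}=H_{g'}$. Consequently the set of pre-subgroups ordered by $\prec$ is a lattice, with $g=\inf(f,f')$ and $g'=\sup(f,f')$.
   Context: Let $\mathcal H$ be a finite-dimensional Hilbert space and $V$ a multiplicative unitary on $\mathcal H$ ($V_{12}V_{13}V_{23}=V_{23}V_{12}$) of multiplicity 1 (one-dimensional space of fixed vectors $\xi$, i.e. $V(\xi\otimes\eta)=\xi\otimes\eta$ for all $\eta$). Fix a unit fixed vector $e$. A pre-subgroup is $f\in\mathcal H$ with $\|f\|=1$, $\langle f,e\rangle>0$, $V(f\otimes f)=f\otimes f$; $H^f=\{\eta:V(f\otimes\eta)=f\otimes\eta\}$, $H_f=\{\eta:V(\eta\otimes f)=\eta\otimes f\}$. The partial order $g\prec f$ on pre-subgroups means $V(f\otimes g)=f\otimes g$, equivalently $H^g\subset H^f$, equivalently $H_f\subset H_g$. *)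

theory Defs
  imports "HOL-Analysis.Analysis"
begin

text \<open>The finite-dimensional Hilbert space H is modelled as complex ^ 'n ('n a finite index
type, i.e. an orthonormal basis), H \<otimes> H as complex ^ ('n \<times> 'n), and
H \<otimes> H \<otimes> H as complex ^ ('n \<times> 'n \<times> 'n).\<close>

definition cinner :: "complex ^ 'n::finite \<Rightarrow> complex ^ 'n \<Rightarrow> complex" where
  "cinner x y = (\<Sum>i\<in>UNIV. x $ i * cnj (y $ i))"

definition tensor :: "complex ^ 'n::finite \<Rightarrow> complex ^ 'n \<Rightarrow> complex ^ ('n \<times> 'n)" where
  "tensor x y = (\<chi> p. x $ fst p * y $ snd p)"

definition adjoint_mat :: "complex ^ 'm::finite ^ 'n::finite \<Rightarrow> complex ^ 'n ^ 'm" where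
  "adjoint_mat A = (\<chi> i j. cnj (A $ j $ i))"

definition unitary_mat :: "complex ^ 'n::finite ^ 'n \<Rightarrow> bool" where
  "unitary_mat U \<longleftrightarrow> U ** adjoint_mat U = mat 1 \<and> adjoint_mat U ** U = mat 1"

text \<open>Leg numbering: V12 = V \<otimes> 1, V23 = 1 \<otimes> V, V13 acting on legs 1 and 3.\<close>

definition leg12 :: "complex ^ ('n::finite \<times> 'n) ^ ('n \<times> 'n) \<Rightarrow> complex ^ ('n \<times> 'n \<times> 'n) ^ ('n \<times> 'n \<times> 'n)" where
  "leg12 V = (\<chi> p q. V $ (fst p, fst (snd p)) $ (fst q, fst (snd q)) * (if snd (snd p) = snd (snd q) then 1 else 0))"

definition leg23 :: "complex ^ ('n::finite \<times> 'n) ^ ('n \<times> 'n) \<Rightarrow> complex ^ ('n \<times> 'n \<times> 'n) ^ ('n \<times> 'n \<times> 'n)" where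
  "leg23 V = (\<chi> p q. (if fst p = fst q then 1 else 0) * V $ snd p $ snd q)"

definition leg13 :: "complex ^ ('n::finite \<times> 'n) ^ ('n \<times> 'n) \<Rightarrow> complex ^ ('n \<times> 'n \<times> 'n) ^ ('n \<times> 'n \<times> 'n)" where
  "leg13 V = (\<chi> p q. V $ (fst p, snd (snd p)) $ (fst q, snd (snd q)) * (if fst (snd p) = fst (snd q) then 1 else 0))"

definition multiplicative_unitary :: "complex ^ ('n::finite \<times> 'n) ^ ('n \<times> 'n) \<Rightarrow> bool" where
  "multiplicative_unitary V \<longleftrightarrow> unitary_mat V \<and>
     leg12 V ** leg13 V ** leg23 V = leg23 V ** leg12 V"

definition fixed_vec :: "complex ^ ('n::finite \<times> 'n) ^ ('n \<times> 'n) \<Rightarrow> complex ^ 'n \<Rightarrow> bool" where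
  "fixed_vec V \<xi> \<longleftrightarrow> (\<forall>\<eta>. V *v tensor \<xi> \<eta> = tensor \<xi> \<eta>)"

definition multiplicity_one :: "complex ^ ('n::finite \<times> 'n) ^ ('n \<times> 'n) \<Rightarrow> bool" where
  "multiplicity_one V \<longleftrightarrow> (\<exists>\<xi>. \<xi> \<noteq> 0 \<and> fixed_vec V \<xi> \<and>
      (\<forall>\<zeta>. fixed_vec V \<zeta> \<longrightarrow> (\<exists>c::complex. \<zeta> = c *s \<xi>)))"

definition pre_subgroup :: "complex ^ ('n::finite \<times> 'n) ^ ('n \<times> 'n) \<Rightarrow> complex ^ 'n \<Rightarrow> complex ^ 'n \<Rightarrow> bool" where
  "pre_subgroup V e f \<longleftrightarrow> norm f = 1 \<and> Im (cinner f e) = 0 \<and> Re (cinner f e) > 0 \<and>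
     V *v tensor f f = tensor f f"

definition Hup :: "complex ^ ('n::finite \<times> 'n) ^ ('n \<times> 'n) \<Rightarrow> complex ^ 'n \<Rightarrow> (complex ^ 'n) set" where
  "Hup V f = {\<eta>. V *v tensor f \<eta> = tensor f \<eta>}"

definition Hlow :: "complex ^ ('n::finite \<times> 'n) ^ ('n \<times> 'n) \<Rightarrow> complex ^ 'n \<Rightarrow> (complex ^ 'n) set" where
  "Hlow V f = {\<eta>. V *v tensor \<eta> f = tensor \<eta> f}"

definition prec :: "complex ^ ('n::finite \<times> 'n) ^ ('n \<times> 'n) \<Rightarrow> complex ^ 'n \<Rightarrow> complex ^ 'n \<Rightarrow> bool" where
  "prec V g f \<longleftrightarrow> V *v tensor f g = tensor f g"

end

theory Submission
  imports Defs
begin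

text \<open>Let \<open>K = Hup V f \<inter> Hup V f'\<close> and let \<open>L\<close> be the space of \<open>x\<close> with \<open>V(x \<otimes> \<eta>) = x \<otimes> \<eta>\<close>
  for all \<open>\<eta> \<in> K\<close>. The meet is a normalised vector \<open>g \<in> K \<inter> L\<close>, for then \<open>Hup V g = K\<close> (the
  inclusion \<open>Hup V g \<subseteq> K\<close> is a transitivity law coming from the pentagon equation). The slices
  \<open>x \<mapsto> (\<langle>f| \<otimes> 1) V (f \<otimes> x)\<close> and the same for \<open>f'\<close> are contractions which, by the pentagon
  equation, preserve \<open>L\<close>, and whose common fixed vectors lie in \<open>K\<close>. The Cesaro means of their
  average, started at the fixed vector \<open>e\<close>, accumulate at a common fixed vector \<open>s \<in> K \<inter> L\<close> with
  \<open>\<langle>s, y\<rangle> = \<langle>e, y\<rangle>\<close> for all \<open>y \<in> K\<close>. Testing against \<open>y = s\<close> gives \<open>\<langle>s, e\<rangle> = norm s ^ 2\<close>, and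
  testing against a cofixed vector \<open>c\<close> (\<open>V(x \<otimes> c) = x \<otimes> c\<close> for all \<open>x\<close>), which lies in \<open>K\<close>, gives
  \<open>s \<noteq> 0\<close>: a partial trace computation with the pentagon equation produces \<open>c\<close> and, using
  multiplicity one, shows \<open>\<langle>c, e\<rangle> \<noteq> 0\<close>. The join comes from \<open>Hlow V f \<inter> Hlow V f'\<close> in the same way,
  with the slices \<open>x \<mapsto> (1 \<otimes> \<langle>f|) V\<^sup>* (x \<otimes> f)\<close> started at \<open>f\<close> and tested against \<open>e\<close>. The
  lattice statements follow because \<open>prec V g f\<close> means \<open>g \<in> Hup V f\<close> and \<open>prec V f h\<close> means
  \<open>h \<in> Hlow V f\<close>.\<close>

lemma sum_UNIV_prod:
  "(\<Sum>p\<in>(UNIV::('a::finite \<times> 'b::finite) set). f p) = (\<Sum>a\<in>UNIV. \<Sum>b\<in>UNIV. f (a, b))"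
  by (simp add: sum.cartesian_product)

lemma cinner_add_left: "cinner (x + y) z = cinner x z + cinner y z"
  by (simp add: cinner_def distrib_right sum.distrib)

lemma cinner_diff_left: "cinner (x - y) z = cinner x z - cinner y z"
  by (simp add: cinner_def left_diff_distrib sum_subtractf)

lemma cinner_smult_left: "cinner (c *s x) y = c * cinner x y"
  by (simp add: cinner_def sum_distrib_left mult.assoc)

lemma cinner_smult_right: "cinner x (c *s y) = cnj c * cinner x y"
  by (simp add: cinner_def sum_distrib_left mult_ac)

lemma scaleR_vec_eq_smult: "r *\<^sub>R (x :: complex ^ 'n::finite) = (of_real r :: complex) *s x"
  by (simp add: vec_eq_iff scaleR_conv_of_real[where 'a = complex])

lemma cinner_zero_left [simp]: "cinner 0 y = 0"
  by (simp add: cinner_def)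

lemma cinner_sum_left: "cinner (\<Sum>k\<in>S. f k) y = (\<Sum>k\<in>S. cinner (f k) y)"
  by (induction S rule: infinite_finite_induct) (auto simp: cinner_add_left)

lemma cnj_cinner: "cnj (cinner x y) = cinner y x"
  by (simp add: cinner_def mult.commute)

lemma Re_cinner: "Re (cinner x y) = inner x y"
  by (simp add: cinner_def inner_vec_def inner_complex_def)

lemma cinner_self: "cinner x x = of_real ((norm x)\<^sup>2)"
proof -
  have "Im (cinner x x) = 0"
    by (simp add: cinner_def)
  then show ?thesis
    by (simp add: complex_eq_iff Re_cinner power2_norm_eq_inner)
qed

lemma cinner_self_eq_0_iff [simp]: "cinner x x = 0 \<longleftrightarrow> x = 0"
  by (simp add: cinner_self)

lemma cinner_ext: "(\<And>z. cinner x z = cinner y z) \<Longrightarrow> x = y"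
  by (metis cinner_diff_left cinner_self_eq_0_iff right_minus_eq)

lemma norm_smult: "norm (c *s x) = cmod c * norm x"
proof -
  have "cinner (c *s x) (c *s x) = (c * cnj c) * cinner x x"
    by (simp add: cinner_smult_left cinner_smult_right mult_ac)
  then have "of_real ((norm (c *s x))\<^sup>2) = (of_real ((cmod c * norm x)\<^sup>2) :: complex)"
    by (simp only: cinner_self power_mult_distrib of_real_mult complex_norm_square)
  then have "(norm (c *s x))\<^sup>2 = (cmod c * norm x)\<^sup>2"
    by (simp only: of_real_eq_iff)
  then show ?thesis
    by simp
qed

lemma norm_normalize: "x \<noteq> 0 \<Longrightarrow> norm ((of_real (1 / norm x) :: complex) *s x) = 1"
  by (simp add: norm_smult norm_divide)

lemma cinner_Cauchy_Schwarz: "cmod (cinner x y) \<le> norm x * norm y"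
proof (cases "cinner x y = 0")
  case False
  define a where "a = cinner x y"
  have "of_real ((cmod a)\<^sup>2) = cinner x (a *s y)"
    by (simp add: cinner_smult_right a_def complex_mult_cnj cmod_power2 mult.commute)
  then have "(cmod a)\<^sup>2 = inner x (a *s y)"
    by (metis Re_cinner Re_complex_of_real)
  also have "\<dots> \<le> norm x * (cmod a * norm y)"
    using norm_cauchy_schwarz[of x "a *s y"] by (simp add: norm_smult)
  finally have "cmod a * cmod a \<le> cmod a * (norm x * norm y)"
    by (simp add: power2_eq_square mult_ac)
  then show ?thesis using False by (simp add: a_def)
qed simp

lemma vec_eq_if_norm_eq_Re_cinner:
  assumes "norm x = norm y" and "Re (cinner x y) = (norm y)\<^sup>2"
  shows "x = y"
proof -
  have "(norm (x - y))\<^sup>2 = (norm x)\<^sup>2 + (norm y)\<^sup>2 - 2 * inner x y"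
    by (simp add: power2_norm_eq_inner inner_diff_left inner_diff_right inner_commute)
  also have "\<dots> = 0"
    using assms by (simp add: Re_cinner)
  finally show ?thesis
    by simp
qed

section \<open>Contractions on finite-dimensional inner product spaces\<close>

lemma sum_eq_card_scaleR_imp_eq:
  fixes u :: "'i \<Rightarrow> 'a::real_inner"
  assumes fin: "finite I" and le: "\<And>i. i \<in> I \<Longrightarrow> norm (u i) \<le> norm x"
    and sum: "(\<Sum>i\<in>I. u i) = real (card I) *\<^sub>R x" and "i \<in> I"
  shows "u i = x"
proof -
  have "(\<Sum>i\<in>I. (norm (u i - x))\<^sup>2) = (\<Sum>i\<in>I. (norm (u i))\<^sup>2 + (norm x)\<^sup>2 - 2 * inner (u i) x)"
    by (simp add: power2_norm_eq_inner inner_diff_left inner_diff_right inner_commute algebra_simps)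
  also have "\<dots> = (\<Sum>i\<in>I. (norm (u i))\<^sup>2) + real (card I) * (norm x)\<^sup>2 - 2 * inner (\<Sum>i\<in>I. u i) x"
    by (simp add: sum.distrib sum_subtractf inner_sum_left sum_distrib_left)
  also have "\<dots> = (\<Sum>i\<in>I. (norm (u i))\<^sup>2 - (norm x)\<^sup>2)"
    by (simp add: sum power2_norm_eq_inner sum_subtractf)
  also have "\<dots> \<le> 0"
    by (intro sum_nonpos) (simp add: le power_mono)
  finally have "(\<Sum>i\<in>I. (norm (u i - x))\<^sup>2) = 0"
    by (simp add: order_antisym sum_nonneg)
  then show ?thesis
    using fin \<open>i \<in> I\<close> by (simp add: sum_nonneg_eq_0_iff)
qed

lemma midpoint_eq_imp_eq:
  fixes a b x :: "'a::real_inner"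
  assumes "a + b = 2 *\<^sub>R x" and "norm a \<le> norm x" and "norm b \<le> norm x"
  shows "a = x" and "b = x"
proof -
  have "(\<Sum>i\<in>UNIV. if i then a else b) = real (card (UNIV :: bool set)) *\<^sub>R x"
    using assms(1) by (simp add: UNIV_bool add.commute)
  from sum_eq_card_scaleR_imp_eq[OF _ _ this] have "(if i then a else b) = x" for i
    using assms(2,3) by simp
  from this[of True] this[of False] show "a = x" "b = x"
    by simp_all
qed

lemma inner_idempotent_contraction:
  fixes P :: "'a::real_inner \<Rightarrow> 'a"
  assumes lin: "linear P" and idem: "\<And>x. P (P x) = P x" and contr: "\<And>x. norm (P x) \<le> norm x"
  shows "inner (P y) (z - P z) = 0"
proof -
  define u where "u = P y"
  define w where "w = z - P z"
  define a where "a = inner u w"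
  define W where "W = (norm w)\<^sup>2"
  define t where "t = - a / (W + 1)"
  have W: "W \<ge> 0"
    by (simp add: W_def)
  then have tW: "t * (W + 1) = - a"
    by (simp add: t_def)
  text \<open>\<open>P\<close> maps every \<open>u + t w\<close> to \<open>u\<close>, so \<open>u\<close> has minimal norm on that line; the choice
    of \<open>t\<close> makes this contradict \<open>a \<noteq> 0\<close>.\<close>
  have "P (u + t *\<^sub>R w) = u"
    by (simp add: u_def w_def idem linear_add[OF lin] linear_scale[OF lin] linear_diff[OF lin])
  then have "(norm u)\<^sup>2 \<le> (norm (u + t *\<^sub>R w))\<^sup>2"
    by (metis contr norm_ge_zero power_mono)
  also have "\<dots> = (norm u)\<^sup>2 + t * (2 * a + t * W)"
    by (simp add: a_def W_def power2_norm_eq_inner inner_add_left inner_add_right inner_commute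
        algebra_simps)
  finally have "0 \<le> (W + 1)\<^sup>2 * (t * (2 * a + t * W))"
    by simp
  also have "\<dots> = (t * (W + 1)) * (2 * a * (W + 1) + (t * (W + 1)) * W)"
    by (simp add: power2_eq_square algebra_simps)
  also have "\<dots> = - a\<^sup>2 * (W + 2)"
    unfolding tW by (simp add: power2_eq_square algebra_simps)
  finally have "a\<^sup>2 * (W + 2) \<le> 0"
    by simp
  then have "a\<^sup>2 \<le> 0"
    using W by (simp add: mult_le_0_iff)
  then show ?thesis
    by (simp add: a_def u_def w_def)
qed

definition cesaro_mean :: "('a::real_vector \<Rightarrow> 'a) \<Rightarrow> 'a \<Rightarrow> nat \<Rightarrow> 'a" where
  "cesaro_mean T s N = (1 / real (Suc N)) *\<^sub>R (\<Sum>k\<le>N. (T ^^ k) s)"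

lemma norm_funpow_contraction_le:
  fixes T :: "'a::real_normed_vector \<Rightarrow> 'a"
  assumes "\<And>x. norm (T x) \<le> norm x"
  shows "norm ((T ^^ k) s) \<le> norm s"
proof (induction k)
  case (Suc k)
  then show ?case
    using assms[of "(T ^^ k) s"] by simp
qed simp

lemma norm_cesaro_mean_le:
  assumes "\<And>x. norm (T x) \<le> norm x"
  shows "norm (cesaro_mean T s N) \<le> norm s"
proof -
  have "norm (\<Sum>k\<le>N. (T ^^ k) s) \<le> (\<Sum>k\<le>N. norm ((T ^^ k) s))"
    by (rule norm_sum)
  also have "\<dots> \<le> (\<Sum>k\<le>N. norm s)"
    by (intro sum_mono norm_funpow_contraction_le assms)
  finally show ?thesis
    by (simp add: cesaro_mean_def field_simps)
qed

lemma cesaro_mean_defect: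
  assumes "linear T"
  shows "T (cesaro_mean T s N) - cesaro_mean T s N = (1 / real (Suc N)) *\<^sub>R ((T ^^ Suc N) s - s)"
proof -
  have "(\<Sum>k\<le>N. (T ^^ Suc k) s) - (\<Sum>k\<le>N. (T ^^ k) s) = (T ^^ Suc N) s - s"
    by (induction N) (auto simp: algebra_simps)
  then show ?thesis
    by (simp add: cesaro_mean_def linear_scale[OF assms] linear_sum[OF assms]
        flip: scaleR_diff_right)
qed

lemma cesaro_mean_defect_tendsto_zero:
  assumes "linear T" and "\<And>x. norm (T x) \<le> norm x"
  shows "(\<lambda>N. T (cesaro_mean T s N) - cesaro_mean T s N) \<longlonglongrightarrow> 0"
proof (rule Lim_null_comparison)
  show "\<forall>\<^sub>F N in sequentially. norm (T (cesaro_mean T s N) - cesaro_mean T s N) \<le> 2 * norm s / real (Suc N)"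
  proof (intro always_eventually allI)
    fix N
    have "norm ((T ^^ Suc N) s - s) \<le> norm ((T ^^ Suc N) s) + norm s"
      by (rule norm_triangle_ineq4)
    then have "norm ((T ^^ Suc N) s - s) \<le> 2 * norm s"
      using norm_funpow_contraction_le[OF assms(2), of "Suc N" s] by simp
    then show "norm (T (cesaro_mean T s N) - cesaro_mean T s N) \<le> 2 * norm s / real (Suc N)"
      by (simp add: cesaro_mean_defect[OF assms(1)] divide_right_mono)
  qed
  show "(\<lambda>N. 2 * norm s / real (Suc N)) \<longlonglongrightarrow> 0"
    using tendsto_mult_left_zero[OF LIMSEQ_inverse_real_of_nat, of "2 * norm s"]
    by (simp add: divide_inverse mult.commute)
qed

lemma subspace_range_diff_self: "linear T \<Longrightarrow> subspace (range (\<lambda>x. T x - x))"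
  using linear_subspace_image[OF linear_compose_sub[OF _ linear_ident] subspace_UNIV] .

lemma diff_cesaro_mean_in_range:
  assumes lin: "linear T"
  shows "s - cesaro_mean T s N \<in> range (\<lambda>x. T x - x)"
proof -
  let ?R = "range (\<lambda>x. T x - x)"
  have R: "subspace ?R"
    using lin by (rule subspace_range_diff_self)
  have powers: "s - (T ^^ k) s \<in> ?R" for k
  proof (induction k)
    case (Suc k)
    have "s - (T ^^ Suc k) s = (s - (T ^^ k) s) + (T (- (T ^^ k) s) - (- (T ^^ k) s))"
      by (simp add: linear_neg[OF lin])
    also have "\<dots> \<in> ?R"
      using Suc by (intro subspace_add[OF R] rangeI)
    finally show ?case .
  qed (simp add: subspace_0[OF R])
  have "s - cesaro_mean T s N = (1 / real (Suc N)) *\<^sub>R (\<Sum>k\<le>N. s - (T ^^ k) s)"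
    by (simp add: cesaro_mean_def sum_subtractf scaleR_diff_right sum_constant_scaleR)
  then show ?thesis
    by (simp add: R powers subspace_scale subspace_sum)
qed

text \<open>Finite-dimensional mean ergodic theorem: the Cesaro means of \<open>s\<close> accumulate at a fixed point
  \<open>s0\<close>, and \<open>s - s0\<close> lies in the range of \<open>T - 1\<close>, so \<open>s0\<close> and \<open>s\<close> agree on every linear
  functional invariant under \<open>T\<close>.\<close>

lemma mean_ergodic_fixed_point:
  fixes T :: "'a::euclidean_space \<Rightarrow> 'a"
  assumes lin: "linear T" and contr: "\<And>x. norm (T x) \<le> norm x"
    and L: "subspace L" and inv: "\<And>x. x \<in> L \<Longrightarrow> T x \<in> L" and s: "s \<in> L"
  shows "\<exists>s0\<in>L. T s0 = s0 \<and> s - s0 \<in> range (\<lambda>x. T x - x)"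
proof -
  define a where "a = cesaro_mean T s"
  have aL: "a N \<in> L" for N
  proof -
    have "(T ^^ k) s \<in> L" for k
      by (induction k) (simp_all add: s inv)
    then show ?thesis
      by (simp add: a_def cesaro_mean_def subspace_scale[OF L] subspace_sum[OF L])
  qed
  have "a N \<in> cball 0 (norm s)" for N
    using norm_cesaro_mean_le[OF contr] by (simp add: a_def)
  then obtain l r where r: "strict_mono r" and lim: "(a \<circ> r) \<longlonglongrightarrow> l"
    using seq_compactE[OF compact_imp_seq_compact[OF compact_cball], of a] by blast
  have "l \<in> L"
    by (rule closed_sequentially[OF closed_subspace[OF L] _ lim]) (simp add: aL)
  have "closed (range (\<lambda>x. T x - x))"
    using lin by (intro closed_subspace subspace_range_diff_self)
  moreover have "s - (a \<circ> r) k \<in> range (\<lambda>x. T x - x)" for k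
    by (simp add: a_def diff_cesaro_mean_in_range[OF lin])
  moreover have "(\<lambda>k. s - (a \<circ> r) k) \<longlonglongrightarrow> s - l"
    by (intro tendsto_diff tendsto_const lim)
  ultimately have "s - l \<in> range (\<lambda>x. T x - x)"
    by (rule closed_sequentially)
  have "isCont T l"
    using lin by (simp add: linear_continuous_at linear_conv_bounded_linear)
  then have "(\<lambda>k. T ((a \<circ> r) k) - (a \<circ> r) k) \<longlonglongrightarrow> T l - l"
    by (intro tendsto_diff isCont_tendsto_compose[of l T] lim)
  moreover have "(\<lambda>k. T ((a \<circ> r) k) - (a \<circ> r) k) \<longlonglongrightarrow> 0"
    using LIMSEQ_subseq_LIMSEQ[OF cesaro_mean_defect_tendsto_zero[OF lin contr] r]
    by (simp add: a_def comp_def)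
  ultimately have "T l - l = 0"
    by (rule LIMSEQ_unique)
  then show ?thesis
    using \<open>l \<in> L\<close> \<open>s - l \<in> range (\<lambda>x. T x - x)\<close> by auto
qed

lemma common_fixed_point_of_contractions:
  fixes P Q :: "'a::euclidean_space \<Rightarrow> 'a"
  assumes lin: "linear P" "linear Q"
    and contr: "\<And>x. norm (P x) \<le> norm x" "\<And>x. norm (Q x) \<le> norm x"
    and L: "subspace L" and inv: "\<And>x. x \<in> L \<Longrightarrow> P x \<in> L" "\<And>x. x \<in> L \<Longrightarrow> Q x \<in> L"
    and s: "s \<in> L"
  shows "\<exists>s0\<in>L. P s0 = s0 \<and> Q s0 = s0 \<and> s - s0 \<in> range (\<lambda>x. (P x - x) + (Q x - x))"
proof -
  define T where "T x = (1 / 2) *\<^sub>R (P x + Q x)" for x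
  have "linear T"
    unfolding T_def using lin by (intro linear_compose_scale_right linear_compose_add)
  moreover have "norm (T x) \<le> norm x" for x
    using norm_triangle_ineq[of "P x" "Q x"] contr[of x] by (simp add: T_def)
  moreover have "T x \<in> L" if "x \<in> L" for x
    using that by (simp add: T_def inv subspace_add subspace_scale L)
  ultimately obtain s0 x where "s0 \<in> L" "T s0 = s0" "s - s0 = T x - x"
    using mean_ergodic_fixed_point[OF _ _ L _ s] by blast
  have "P s0 + Q s0 = 2 *\<^sub>R T s0"
    by (simp add: T_def)
  then have "P s0 = s0" "Q s0 = s0"
    using midpoint_eq_imp_eq[OF _ contr(1)[of s0] contr(2)[of s0]] \<open>T s0 = s0\<close> by simp_all
  have "T x - x = (1 / 2) *\<^sub>R ((P x + Q x) - 2 *\<^sub>R x)"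
    by (simp add: T_def scaleR_diff_right)
  also have "\<dots> = (1 / 2) *\<^sub>R ((P x - x) + (Q x - x))"
    by (simp add: scaleR_2 algebra_simps)
  also have "\<dots> = (P ((1 / 2) *\<^sub>R x) - (1 / 2) *\<^sub>R x) + (Q ((1 / 2) *\<^sub>R x) - (1 / 2) *\<^sub>R x)"
    by (simp add: linear_scale lin scaleR_right_distrib scaleR_diff_right)
  finally show ?thesis
    using \<open>s0 \<in> L\<close> \<open>P s0 = s0\<close> \<open>Q s0 = s0\<close> \<open>s - s0 = T x - x\<close> by auto
qed

lemma matrix_vector_smult: "(A :: complex ^ 'm::finite ^ 'k::finite) *v (c *s x) = c *s (A *v x)"
  by (simp add: vec_eq_iff matrix_vector_mult_def sum_distrib_left mult_ac)

lemma matrix_vector_sum: "A *v (\<Sum>k\<in>S. f k) = (\<Sum>k\<in>S. A *v f k)"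
  by (induction S rule: infinite_finite_induct) (auto simp: matrix_vector_right_distrib)

lemma tensor_add_left: "tensor (x + y) z = tensor x z + tensor y z"
  and tensor_add_right: "tensor x (y + z) = tensor x y + tensor x z"
  and tensor_smult_left: "tensor (c *s x) z = c *s tensor x z"
  and tensor_smult_right: "tensor x (c *s z) = c *s tensor x z"
  by (simp_all add: vec_eq_iff tensor_def distrib_left distrib_right mult_ac)

lemma tensor_zero_left [simp]: "tensor 0 z = 0"
  and tensor_zero_right [simp]: "tensor x 0 = 0"
  by (simp_all add: vec_eq_iff tensor_def)

lemma tensor_sum_left: "tensor (\<Sum>k\<in>S. f k) z = (\<Sum>k\<in>S. tensor (f k) z)"
  by (induction S rule: infinite_finite_induct) (auto simp: tensor_add_left)

lemma tensor_sum_right: "tensor z (\<Sum>k\<in>S. f k) = (\<Sum>k\<in>S. tensor z (f k))"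
  by (induction S rule: infinite_finite_induct) (auto simp: tensor_add_right)

lemma cinner_tensor: "cinner (tensor a b) (tensor c d) = cinner a c * cinner b d"
  by (simp add: cinner_def tensor_def sum_UNIV_prod sum_product mult_ac)

lemma norm_tensor: "norm (tensor a b) = norm a * norm b"
proof -
  have "of_real ((norm (tensor a b))\<^sup>2) = (of_real ((norm a * norm b)\<^sup>2) :: complex)"
    by (simp only: cinner_self[symmetric] cinner_tensor) (simp add: cinner_self power_mult_distrib)
  then have "(norm (tensor a b))\<^sup>2 = (norm a * norm b)\<^sup>2"
    by (simp only: of_real_eq_iff)
  then show ?thesis
    by simp
qed

lemma cinner_adjoint: "cinner (A *v x) y = cinner x (adjoint_mat A *v y)"
proof -
  have "cinner (A *v x) y = (\<Sum>i\<in>UNIV. \<Sum>j\<in>UNIV. A $ i $ j * x $ j * cnj (y $ i))"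
    by (simp add: cinner_def matrix_vector_mult_def sum_distrib_right)
  also have "\<dots> = (\<Sum>j\<in>UNIV. \<Sum>i\<in>UNIV. A $ i $ j * x $ j * cnj (y $ i))"
    by (rule sum.swap)
  also have "\<dots> = cinner x (adjoint_mat A *v y)"
    by (simp add: cinner_def matrix_vector_mult_def adjoint_mat_def sum_distrib_left mult_ac)
  finally show ?thesis .
qed

lemma adjoint_adjoint [simp]: "adjoint_mat (adjoint_mat A) = A"
  by (simp add: adjoint_mat_def vec_eq_iff)

lemma unitary_adjoint: "unitary_mat U \<Longrightarrow> unitary_mat (adjoint_mat U)"
  by (simp add: unitary_mat_def)

lemma unitary_adjoint_cancel: "unitary_mat U \<Longrightarrow> adjoint_mat U *v (U *v x) = x"
  and unitary_cancel_adjoint: "unitary_mat U \<Longrightarrow> U *v (adjoint_mat U *v x) = x"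
  by (simp_all add: unitary_mat_def matrix_vector_mul_assoc)

lemma unitary_cinner: "unitary_mat U \<Longrightarrow> cinner (U *v x) (U *v y) = cinner x y"
  by (simp add: cinner_adjoint unitary_adjoint_cancel)

lemma unitary_norm: "unitary_mat U \<Longrightarrow> norm (U *v x) = norm x"
  by (metis norm_eq_sqrt_inner Re_cinner unitary_cinner)

lemma unitary_fixed_adjoint: "unitary_mat U \<Longrightarrow> U *v x = x \<Longrightarrow> adjoint_mat U *v x = x"
  by (metis unitary_adjoint_cancel)

lemma unitary_inj: "unitary_mat U \<Longrightarrow> U *v x = U *v y \<Longrightarrow> x = y"
  by (metis unitary_adjoint_cancel)

section \<open>Threefold tensors and the pentagon equation\<close>

lemma mult_if_zero_left: "(if P then x else 0) * y = (if P then x * y else (0::'a::mult_zero))"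
  and mult_if_zero_right: "y * (if P then x else 0) = (if P then y * x else (0::'a::mult_zero))"
  and sum_if_zero: "(\<Sum>i\<in>A. if P then f i else 0) = (if P then (\<Sum>i\<in>A. f i) else (0::'b::comm_monoid_add))"
  and cnj_if_zero: "cnj (if P then z else 0) = (if P then cnj z else 0)"
  by simp_all

lemmas if_zero_simps = mult_if_zero_left mult_if_zero_right sum_if_zero cnj_if_zero

text \<open>\<open>tensor12 W z\<close> is \<open>W \<otimes> z\<close> with \<open>W\<close> on legs 1, 2; \<open>tensor13 W y\<close> puts \<open>W\<close> on
  legs 1, 3 and \<open>y\<close> on leg 2.\<close>

definition tensor12 ::
    "complex ^ ('n::finite \<times> 'n) \<Rightarrow> complex ^ 'n \<Rightarrow> complex ^ ('n \<times> 'n \<times> 'n)" where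
  "tensor12 W z = (\<chi> p. W $ (fst p, fst (snd p)) * z $ snd (snd p))"

definition tensor23 ::
    "complex ^ 'n::finite \<Rightarrow> complex ^ ('n \<times> 'n) \<Rightarrow> complex ^ ('n \<times> 'n \<times> 'n)" where
  "tensor23 x W = (\<chi> p. x $ fst p * W $ snd p)"

definition tensor13 ::
    "complex ^ ('n::finite \<times> 'n) \<Rightarrow> complex ^ 'n \<Rightarrow> complex ^ ('n \<times> 'n \<times> 'n)" where
  "tensor13 W y = (\<chi> p. W $ (fst p, snd (snd p)) * y $ fst (snd p))"

definition tensor_row :: "complex ^ ('n::finite \<times> 'n) \<Rightarrow> 'n \<Rightarrow> complex ^ 'n" where
  "tensor_row W i = (\<chi> j. W $ (i, j))"

definition tensor_col :: "complex ^ ('n::finite \<times> 'n) \<Rightarrow> 'n \<Rightarrow> complex ^ 'n" where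
  "tensor_col W j = (\<chi> i. W $ (i, j))"

lemma tensor12_tensor: "tensor12 (tensor x y) z = tensor23 x (tensor y z)"
  and tensor13_tensor: "tensor13 (tensor x z) y = tensor23 x (tensor y z)"
  by (simp_all add: vec_eq_iff tensor12_def tensor13_def tensor23_def tensor_def mult_ac)

lemma tensor12_apply: "tensor12 W z $ (a, b, c) = tensor (tensor_row W a) z $ (b, c)"
  and tensor23_apply: "tensor23 x W $ (a, b, c) = tensor x (tensor_col W c) $ (a, b)"
  by (simp_all add: tensor12_def tensor23_def tensor_def tensor_row_def tensor_col_def)

lemma leg12_tensor12: "leg12 V *v tensor12 W z = tensor12 (V *v W) z"
  and leg23_tensor23: "leg23 V *v tensor23 x W = tensor23 x (V *v W)"
  and leg13_tensor13: "leg13 V *v tensor13 W y = tensor13 (V *v W) y"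
  by (simp_all add: vec_eq_iff matrix_vector_mult_def leg12_def leg23_def leg13_def tensor12_def
      tensor23_def tensor13_def sum_UNIV_prod sum_distrib_left sum_distrib_right if_zero_simps mult_ac)

lemma leg23_tensor12_apply:
    "(leg23 V *v tensor12 W z) $ (a, b, c) = (V *v tensor (tensor_row W a) z) $ (b, c)"
  and leg12_tensor23_apply:
    "(leg12 V *v tensor23 x W) $ (a, b, c) = (V *v tensor x (tensor_col W c)) $ (a, b)"
  and leg13_tensor23_apply:
    "(leg13 V *v tensor23 x W) $ (a, b, c) = (V *v tensor x (tensor_row W b)) $ (a, c)"
  by (simp_all add: matrix_vector_mult_def leg23_def leg12_def leg13_def tensor12_def tensor23_def
      tensor_def tensor_row_def tensor_col_def sum_UNIV_prod sum_distrib_left sum_distrib_right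
      if_zero_simps mult_ac)

lemma tensor13_cancel:
  assumes "y \<noteq> 0" and "tensor13 W y = tensor13 W' y"
  shows "W = W'"
proof -
  obtain i where "y $ i \<noteq> 0"
    using assms(1) by (auto simp: vec_eq_iff)
  moreover have "W $ (a, c) * y $ i = W' $ (a, c) * y $ i" for a c
    using assms(2) by (auto simp: vec_eq_iff tensor13_def dest: spec[of _ "(a, i, c)"])
  ultimately show ?thesis
    by (simp add: vec_eq_iff)
qed

lemma cinner_tensor23: "cinner (tensor23 x W) (tensor23 y W') = cinner x y * cinner W W'"
  by (simp add: cinner_def tensor23_def sum_UNIV_prod[where 'a = 'a and 'b = "'a \<times> 'a"]
      sum_product mult_ac)

lemma leg12_mult: "leg12 A ** leg12 B = leg12 (A ** B)"
  and leg23_mult: "leg23 A ** leg23 B = leg23 (A ** B)"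
  by (simp_all add: vec_eq_iff prod_eq_iff matrix_matrix_mult_def leg12_def leg23_def
      sum_UNIV_prod sum_distrib_left sum_distrib_right if_zero_simps mult_ac)

lemma leg12_mat_1: "leg12 (mat 1) = mat 1"
  and leg23_mat_1: "leg23 (mat 1) = mat 1"
  by (auto simp: vec_eq_iff leg12_def leg23_def mat_def prod_eq_iff)

lemma adjoint_leg12: "adjoint_mat (leg12 A) = leg12 (adjoint_mat A)"
  and adjoint_leg23: "adjoint_mat (leg23 A) = leg23 (adjoint_mat A)"
  by (auto simp: vec_eq_iff leg12_def leg23_def adjoint_mat_def)

lemma unitary_leg12: "unitary_mat V \<Longrightarrow> unitary_mat (leg12 V)"
  and unitary_leg23: "unitary_mat V \<Longrightarrow> unitary_mat (leg23 V)"
  by (simp_all add: unitary_mat_def adjoint_leg12 adjoint_leg23 leg12_mult leg23_mult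
      leg12_mat_1 leg23_mat_1)

lemma multiplicative_unitary_unitary: "multiplicative_unitary V \<Longrightarrow> unitary_mat V"
  by (simp add: multiplicative_unitary_def)

lemma pentagon_apply:
  assumes "multiplicative_unitary V"
  shows "leg12 V *v (leg13 V *v (leg23 V *v X)) = leg23 V *v (leg12 V *v X)"
  using assms by (simp add: multiplicative_unitary_def matrix_vector_mul_assoc matrix_mul_assoc)

definition fixes_tensor ::
    "complex ^ ('n::finite \<times> 'n) ^ ('n \<times> 'n) \<Rightarrow> complex ^ 'n \<Rightarrow> complex ^ 'n \<Rightarrow> bool" where
  "fixes_tensor V x y \<longleftrightarrow> V *v tensor x y = tensor x y"

lemma Hup_eq: "Hup V f = {\<eta>. fixes_tensor V f \<eta>}"
  and Hlow_eq: "Hlow V f = {\<eta>. fixes_tensor V \<eta> f}"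
  and prec_iff: "prec V g f \<longleftrightarrow> fixes_tensor V f g"
  and fixed_vec_iff: "fixed_vec V \<xi> \<longleftrightarrow> (\<forall>\<eta>. fixes_tensor V \<xi> \<eta>)"
  by (simp_all add: Hup_def Hlow_def prec_def fixed_vec_def fixes_tensor_def)

lemma fixes_tensor_zero_left: "fixes_tensor V 0 y"
  and fixes_tensor_zero_right: "fixes_tensor V x 0"
  by (simp_all add: fixes_tensor_def)

lemma fixes_tensor_add_left: "fixes_tensor V x y \<Longrightarrow> fixes_tensor V x' y \<Longrightarrow> fixes_tensor V (x + x') y"
  and fixes_tensor_add_right: "fixes_tensor V x y \<Longrightarrow> fixes_tensor V x y' \<Longrightarrow> fixes_tensor V x (y + y')"
  and fixes_tensor_smult_left: "fixes_tensor V x y \<Longrightarrow> fixes_tensor V (c *s x) y"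
  and fixes_tensor_smult_right: "fixes_tensor V x y \<Longrightarrow> fixes_tensor V x (c *s y)"
  by (simp_all add: fixes_tensor_def tensor_add_left tensor_add_right tensor_smult_left
      tensor_smult_right matrix_vector_right_distrib matrix_vector_smult)

lemma fixes_tensor_lincomb_left:
  "(\<And>i. i \<in> S \<Longrightarrow> fixes_tensor V (u i) y) \<Longrightarrow> fixes_tensor V (\<Sum>i\<in>S. c i *s u i) y"
  and fixes_tensor_lincomb_right:
  "(\<And>i. i \<in> S \<Longrightarrow> fixes_tensor V x (u i)) \<Longrightarrow> fixes_tensor V x (\<Sum>i\<in>S. c i *s u i)"
  by (simp_all add: fixes_tensor_def tensor_sum_left tensor_sum_right tensor_smult_left
      tensor_smult_right matrix_vector_sum matrix_vector_smult)

lemma basis_expansion: "(\<Sum>k\<in>UNIV. x $ k *s axis k (1::complex)) = x"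
  by (simp add: vec_eq_iff axis_def if_distrib cong: if_cong)

lemma fixes_tensor_basis_left: "(\<And>k. fixes_tensor V (axis k 1) y) \<Longrightarrow> fixes_tensor V x y"
  and fixes_tensor_basis_right: "(\<And>k. fixes_tensor V x (axis k 1)) \<Longrightarrow> fixes_tensor V x y"
  by (metis basis_expansion fixes_tensor_lincomb_left)
    (metis basis_expansion fixes_tensor_lincomb_right)

lemma fixes_tensor_trans:
  assumes mu: "multiplicative_unitary V"
    and "fixes_tensor V x y" "fixes_tensor V y z" "y \<noteq> 0"
  shows "fixes_tensor V x z"
proof -
  define X where "X = tensor23 x (tensor y z)"
  have "leg23 V *v X = X"
    using assms(3) by (simp add: X_def leg23_tensor23 fixes_tensor_def)
  moreover have "leg12 V *v X = X"
    using assms(2) by (simp add: X_def leg12_tensor12 fixes_tensor_def flip: tensor12_tensor)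
  ultimately have "leg12 V *v (leg13 V *v X) = leg12 V *v X"
    using pentagon_apply[OF mu, of X] by simp
  then have "leg13 V *v X = X"
    using unitary_inj[OF unitary_leg12[OF multiplicative_unitary_unitary[OF mu]]] by blast
  then have "tensor13 (V *v tensor x z) y = tensor13 (tensor x z) y"
    by (simp add: X_def leg13_tensor13 flip: tensor13_tensor)
  then show ?thesis
    using tensor13_cancel[OF assms(4)] by (simp add: fixes_tensor_def)
qed

lemma fixes_tensor_row:
  assumes mu: "multiplicative_unitary V"
    and "fixes_tensor V f \<eta>" "fixes_tensor V x \<eta>"
  shows "fixes_tensor V (tensor_row (V *v tensor f x) i) \<eta>"
proof -
  define W where "W = V *v tensor f x"
  define X where "X = tensor23 f (tensor x \<eta>)"
  have "leg23 V *v X = X"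
    using assms(3) by (simp add: X_def leg23_tensor23 fixes_tensor_def)
  moreover have "leg13 V *v X = X"
    using assms(2) by (simp add: X_def leg13_tensor13 fixes_tensor_def flip: tensor13_tensor)
  moreover have "leg12 V *v X = tensor12 W \<eta>"
    by (simp add: X_def W_def leg12_tensor12 flip: tensor12_tensor)
  ultimately have "leg23 V *v tensor12 W \<eta> = tensor12 W \<eta>"
    using pentagon_apply[OF mu, of X] by simp
  then have "(V *v tensor (tensor_row W i) \<eta>) $ (b, c) = tensor (tensor_row W i) \<eta> $ (b, c)" for b c
    by (metis leg23_tensor12_apply tensor12_apply)
  then show ?thesis
    by (simp add: fixes_tensor_def vec_eq_iff W_def)
qed

lemma fixes_tensor_col:
  assumes mu: "multiplicative_unitary V"
    and "fixes_tensor V \<eta> x" "fixes_tensor V \<eta> f"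
  shows "fixes_tensor V \<eta> (tensor_col (adjoint_mat V *v tensor x f) j)"
proof -
  have U: "unitary_mat V"
    using mu by (rule multiplicative_unitary_unitary)
  define W where "W = adjoint_mat V *v tensor x f"
  define X where "X = tensor23 \<eta> (tensor x f)"
  have "leg23 V *v tensor23 \<eta> W = X"
    by (simp add: X_def W_def leg23_tensor23 unitary_cancel_adjoint[OF U])
  moreover have "leg13 V *v X = X"
    using assms(3) by (simp add: X_def leg13_tensor13 fixes_tensor_def flip: tensor13_tensor)
  moreover have "leg12 V *v X = X"
    using assms(2) by (simp add: X_def leg12_tensor12 fixes_tensor_def flip: tensor12_tensor)
  ultimately have "leg23 V *v (leg12 V *v tensor23 \<eta> W) = leg23 V *v tensor23 \<eta> W"
    using pentagon_apply[OF mu, of "tensor23 \<eta> W"] by simp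
  then have "leg12 V *v tensor23 \<eta> W = tensor23 \<eta> W"
    using unitary_inj[OF unitary_leg23[OF U]] by blast
  then have "(V *v tensor \<eta> (tensor_col W j)) $ (a, b) = tensor \<eta> (tensor_col W j) $ (a, b)" for a b
    by (metis leg12_tensor23_apply tensor23_apply)
  then show ?thesis
    by (simp add: fixes_tensor_def vec_eq_iff W_def)
qed

section \<open>Slices of an operator by a vector state\<close>

text \<open>\<open>slice_left U f x = (\<langle>f| \<otimes> 1) U (f \<otimes> x)\<close> and \<open>slice_right U f x = (1 \<otimes> \<langle>f|) U (x \<otimes> f)\<close>.\<close>

definition slice_left ::
    "complex ^ ('n::finite \<times> 'n) ^ ('n \<times> 'n) \<Rightarrow> complex ^ 'n \<Rightarrow> complex ^ 'n \<Rightarrow> complex ^ 'n" where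
  "slice_left U f x = (\<chi> j. \<Sum>i\<in>UNIV. cnj (f $ i) * (U *v tensor f x) $ (i, j))"

definition slice_right ::
    "complex ^ ('n::finite \<times> 'n) ^ ('n \<times> 'n) \<Rightarrow> complex ^ 'n \<Rightarrow> complex ^ 'n \<Rightarrow> complex ^ 'n" where
  "slice_right U f x = (\<chi> i. \<Sum>j\<in>UNIV. cnj (f $ j) * (U *v tensor x f) $ (i, j))"

lemma slice_left_rows: "slice_left U f x = (\<Sum>i\<in>UNIV. cnj (f $ i) *s tensor_row (U *v tensor f x) i)"
  and slice_right_cols: "slice_right U f x = (\<Sum>j\<in>UNIV. cnj (f $ j) *s tensor_col (U *v tensor x f) j)"
  by (simp_all add: vec_eq_iff slice_left_def slice_right_def tensor_row_def tensor_col_def)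

lemma cinner_slice_left: "cinner (slice_left U f x) z = cinner (U *v tensor f x) (tensor f z)"
proof -
  have "cinner (slice_left U f x) z
      = (\<Sum>j\<in>UNIV. \<Sum>i\<in>UNIV. (U *v tensor f x) $ (i, j) * (cnj (f $ i) * cnj (z $ j)))"
    by (simp add: cinner_def slice_left_def sum_distrib_left sum_distrib_right mult_ac)
  also have "\<dots> = (\<Sum>i\<in>UNIV. \<Sum>j\<in>UNIV. (U *v tensor f x) $ (i, j) * (cnj (f $ i) * cnj (z $ j)))"
    by (rule sum.swap)
  finally show ?thesis
    by (simp add: cinner_def tensor_def sum_UNIV_prod)
qed

lemma cinner_slice_right: "cinner (slice_right U f x) z = cinner (U *v tensor x f) (tensor z f)"
  by (simp add: cinner_def slice_right_def tensor_def sum_UNIV_prod sum_distrib_right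
      sum_distrib_left mult_ac)

lemma slice_left_add: "slice_left U f (x + y) = slice_left U f x + slice_left U f y"
  and slice_left_smult: "slice_left U f (c *s x) = c *s slice_left U f x"
  and slice_left_sum: "slice_left U f (\<Sum>i\<in>S. g i) = (\<Sum>i\<in>S. slice_left U f (g i))"
  and slice_right_add: "slice_right U f (x + y) = slice_right U f x + slice_right U f y"
  and slice_right_smult: "slice_right U f (c *s x) = c *s slice_right U f x"
  by (rule cinner_ext; simp add: cinner_slice_left cinner_slice_right cinner_add_left
      cinner_smult_left cinner_sum_left tensor_add_left tensor_add_right tensor_smult_left
      tensor_smult_right tensor_sum_right matrix_vector_right_distrib matrix_vector_smult
      matrix_vector_sum)+

lemma linear_slice_left: "linear (slice_left U f)"
  and linear_slice_right: "linear (slice_right U f)"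
  by (rule linearI; simp add: slice_left_add slice_left_smult slice_right_add slice_right_smult
      scaleR_vec_eq_smult)+

lemma norm_slice_left_le:
  assumes "unitary_mat U" and "norm f = 1"
  shows "norm (slice_left U f x) \<le> norm x"
proof -
  let ?s = "slice_left U f x"
  have "(norm ?s)\<^sup>2 = Re (cinner (U *v tensor f x) (tensor f ?s))"
    by (simp add: power2_norm_eq_inner Re_cinner flip: cinner_slice_left)
  also have "\<dots> \<le> norm (U *v tensor f x) * norm (tensor f ?s)"
    using complex_Re_le_cmod cinner_Cauchy_Schwarz order_trans by blast
  also have "\<dots> = norm x * norm ?s"
    using assms by (simp add: unitary_norm norm_tensor)
  finally show ?thesis
    by (cases "?s = 0") (simp_all add: power2_eq_square mult_le_cancel_right_pos)
qed

lemma norm_slice_right_le: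
  assumes "unitary_mat U" and "norm f = 1"
  shows "norm (slice_right U f x) \<le> norm x"
proof -
  let ?s = "slice_right U f x"
  have "(norm ?s)\<^sup>2 = Re (cinner (U *v tensor x f) (tensor ?s f))"
    by (simp add: power2_norm_eq_inner Re_cinner flip: cinner_slice_right)
  also have "\<dots> \<le> norm (U *v tensor x f) * norm (tensor ?s f)"
    using complex_Re_le_cmod cinner_Cauchy_Schwarz order_trans by blast
  also have "\<dots> = norm x * norm ?s"
    using assms by (simp add: unitary_norm norm_tensor)
  finally show ?thesis
    by (cases "?s = 0") (simp_all add: power2_eq_square mult_le_cancel_right_pos)
qed

lemma cinner_slice_left_fixed:
  assumes "norm f = 1" and "adjoint_mat U *v tensor f y = tensor f y"
  shows "cinner (slice_left U f x) y = cinner x y"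
  using assms by (simp add: cinner_slice_left cinner_adjoint cinner_tensor cinner_self)

lemma cinner_slice_right_fixed:
  assumes "norm f = 1" and "adjoint_mat U *v tensor y f = tensor y f"
  shows "cinner (slice_right U f x) y = cinner x y"
  using assms by (simp add: cinner_slice_right cinner_adjoint cinner_tensor cinner_self)

lemma slice_left_eq_self_iff:
  assumes U: "unitary_mat U" and f: "norm f = 1"
  shows "slice_left U f x = x \<longleftrightarrow> U *v tensor f x = tensor f x"
proof
  assume fixed: "slice_left U f x = x"
  show "U *v tensor f x = tensor f x"
  proof (rule vec_eq_if_norm_eq_Re_cinner)
    have "cinner (U *v tensor f x) (tensor f x) = cinner x x"
      using fixed by (simp add: cinner_slice_left [symmetric])
    then show "Re (cinner (U *v tensor f x) (tensor f x)) = (norm (tensor f x))\<^sup>2"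
      using f by (simp add: norm_tensor cinner_self)
  qed (use U in \<open>simp add: unitary_norm\<close>)
next
  assume "U *v tensor f x = tensor f x"
  then show "slice_left U f x = x"
    using f by (intro cinner_ext) (simp add: cinner_slice_left cinner_tensor cinner_self)
qed

lemma slice_right_eq_self_iff:
  assumes U: "unitary_mat U" and f: "norm f = 1"
  shows "slice_right U f x = x \<longleftrightarrow> U *v tensor x f = tensor x f"
proof
  assume fixed: "slice_right U f x = x"
  show "U *v tensor x f = tensor x f"
  proof (rule vec_eq_if_norm_eq_Re_cinner)
    have "cinner (U *v tensor x f) (tensor x f) = cinner x x"
      using fixed by (simp add: cinner_slice_right [symmetric])
    then show "Re (cinner (U *v tensor x f) (tensor x f)) = (norm (tensor x f))\<^sup>2"
      using f by (simp add: norm_tensor cinner_self)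
  qed (use U in \<open>simp add: unitary_norm\<close>)
next
  assume "U *v tensor x f = tensor x f"
  then show "slice_right U f x = x"
    using f by (intro cinner_ext) (simp add: cinner_slice_right cinner_tensor cinner_self)
qed

lemma fixes_tensor_slice_left:
  "multiplicative_unitary V \<Longrightarrow> fixes_tensor V f \<eta> \<Longrightarrow> fixes_tensor V x \<eta> \<Longrightarrow>
    fixes_tensor V (slice_left V f x) \<eta>"
  unfolding slice_left_rows by (intro fixes_tensor_lincomb_left fixes_tensor_row)

lemma fixes_tensor_slice_right:
  "multiplicative_unitary V \<Longrightarrow> fixes_tensor V \<eta> x \<Longrightarrow> fixes_tensor V \<eta> f \<Longrightarrow>
    fixes_tensor V \<eta> (slice_right (adjoint_mat V) f x)"
  unfolding slice_right_cols by (intro fixes_tensor_lincomb_right fixes_tensor_col)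

lemma cinner_sum_middle_leg:
  fixes P Q :: "complex ^ ('n::finite \<times> 'n \<times> 'n)"
  assumes "\<And>a b d. P $ (a, b, d) = F b $ (a, d)" and "\<And>a b d. Q $ (a, b, d) = G $ (a, d) * c $ b"
  shows "cinner P Q = (\<Sum>b\<in>UNIV. cnj (c $ b) * cinner (F b) G)"
proof -
  have "cinner P Q = (\<Sum>a\<in>UNIV. \<Sum>b\<in>UNIV. \<Sum>d\<in>UNIV. cnj (c $ b) * (F b $ (a, d) * cnj (G $ (a, d))))"
    by (simp add: cinner_def sum_UNIV_prod assms mult_ac)
  also have "\<dots> = (\<Sum>b\<in>UNIV. \<Sum>a\<in>UNIV. \<Sum>d\<in>UNIV. cnj (c $ b) * (F b $ (a, d) * cnj (G $ (a, d))))"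
    by (rule sum.swap)
  finally show ?thesis
    by (simp add: cinner_def sum_UNIV_prod sum_distrib_left)
qed

lemma slice_left_idem:
  assumes mu: "multiplicative_unitary V" and cc: "fixes_tensor V c c" and c: "norm c = 1"
  shows "slice_left V c (slice_left V c y) = slice_left V c y"
proof (rule cinner_ext)
  fix z
  have U: "unitary_mat V"
    using mu by (rule multiplicative_unitary_unitary)
  define W where "W = V *v tensor c y"
  define w where "w = tensor23 c (tensor c z)"
  have "leg12 V *v tensor23 c (tensor c y) = tensor23 c (tensor c y)" "leg12 V *v w = w"
    using cc by (simp_all add: w_def leg12_tensor12 fixes_tensor_def flip: tensor12_tensor)
  then have pent: "leg12 V *v (leg13 V *v tensor23 c W) = tensor23 c W"
    using pentagon_apply[OF mu, of "tensor23 c (tensor c y)"] by (simp add: W_def leg23_tensor23)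
  have "cinner (slice_left V c y) z = cinner (tensor23 c W) w"
    using c by (simp add: w_def cinner_tensor23 cinner_self cinner_slice_left W_def)
  also have "\<dots> = cinner (leg12 V *v (leg13 V *v tensor23 c W)) (leg12 V *v w)"
    by (simp only: pent \<open>leg12 V *v w = w\<close>)
  also have "\<dots> = cinner (leg13 V *v tensor23 c W) w"
    by (simp add: unitary_cinner[OF unitary_leg12[OF U]])
  also have "\<dots> = (\<Sum>b\<in>UNIV. cnj (c $ b) * cinner (V *v tensor c (tensor_row W b)) (tensor c z))"
    by (rule cinner_sum_middle_leg, rule leg13_tensor23_apply)
      (simp add: w_def tensor23_def tensor_def mult_ac)
  also have "\<dots> = cinner (\<Sum>b\<in>UNIV. cnj (c $ b) *s slice_left V c (tensor_row W b)) z"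
    by (simp add: cinner_sum_left cinner_smult_left cinner_slice_left)
  also have "\<dots> = cinner (slice_left V c (slice_left V c y)) z"
    by (simp add: slice_left_rows[of V c y] W_def slice_left_sum slice_left_smult)
  finally show "cinner (slice_left V c (slice_left V c y)) z = cinner (slice_left V c y) z"
    by simp
qed

section \<open>Partial traces and the cofixed vector\<close>

definition partial_trace2 :: "complex ^ ('n::finite \<times> 'n) ^ ('n \<times> 'n) \<Rightarrow> complex ^ 'n ^ 'n" where
  "partial_trace2 V = (\<chi> i j. \<Sum>k\<in>UNIV. V $ (i, k) $ (j, k))"

definition partial_trace1 :: "complex ^ ('n::finite \<times> 'n) ^ ('n \<times> 'n) \<Rightarrow> complex ^ 'n ^ 'n" where
  "partial_trace1 V = (\<chi> i j. \<Sum>k\<in>UNIV. V $ (k, i) $ (k, j))"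

lemma trace_partial_trace2_eq:
  "(\<Sum>i\<in>UNIV. partial_trace2 V $ i $ i) = (\<Sum>i\<in>UNIV. partial_trace1 V $ i $ i)"
  unfolding partial_trace2_def partial_trace1_def by (simp add: sum.swap[of "\<lambda>i k. V $ (i, k) $ (i, k)"])

lemma partial_trace2_eq_sum_slice_right:
  "partial_trace2 V *v x = (\<Sum>k\<in>UNIV. slice_right V (axis k 1) x)"
proof -
  have "(partial_trace2 V *v x) $ i = (\<Sum>k\<in>UNIV. slice_right V (axis k 1) x) $ i" for i
  proof -
    have "(partial_trace2 V *v x) $ i = (\<Sum>a\<in>UNIV. \<Sum>k\<in>UNIV. V $ (i, k) $ (a, k) * x $ a)"
      by (simp add: partial_trace2_def matrix_vector_mult_def sum_distrib_right)
    also have "\<dots> = (\<Sum>k\<in>UNIV. \<Sum>a\<in>UNIV. V $ (i, k) $ (a, k) * x $ a)"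
      by (rule sum.swap)
    also have "\<dots> = (\<Sum>k\<in>UNIV. slice_right V (axis k 1) x) $ i"
      unfolding slice_right_def matrix_vector_mult_def tensor_def axis_def
      by (simp add: sum_UNIV_prod if_zero_simps mult_ac)
    finally show ?thesis .
  qed
  then show ?thesis
    by (simp add: vec_eq_iff)
qed

lemma partial_trace1_eq_sum_slice_left:
  "partial_trace1 V *v x = (\<Sum>k\<in>UNIV. slice_left V (axis k 1) x)"
proof -
  have "(partial_trace1 V *v x) $ j = (\<Sum>k\<in>UNIV. slice_left V (axis k 1) x) $ j" for j
  proof -
    have "(partial_trace1 V *v x) $ j = (\<Sum>b\<in>UNIV. \<Sum>k\<in>UNIV. V $ (k, j) $ (k, b) * x $ b)"
      by (simp add: partial_trace1_def matrix_vector_mult_def sum_distrib_right)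
    also have "\<dots> = (\<Sum>k\<in>UNIV. \<Sum>b\<in>UNIV. V $ (k, j) $ (k, b) * x $ b)"
      by (rule sum.swap)
    also have "\<dots> = (\<Sum>k\<in>UNIV. slice_left V (axis k 1) x) $ j"
      unfolding slice_left_def matrix_vector_mult_def tensor_def axis_def
      by (simp add: sum_UNIV_prod if_zero_simps mult_ac)
    finally show ?thesis .
  qed
  then show ?thesis
    by (simp add: vec_eq_iff)
qed

lemma leg12_mult_leg13_apply:
  "(leg12 V ** leg13 V) $ (i, k, l) $ (j, k', l') = (\<Sum>m\<in>UNIV. V $ (i, k) $ (m, k') * V $ (m, l) $ (j, l'))"
  and leg13_mult_leg23_apply:
  "(leg13 V ** leg23 V) $ (k, l, i) $ (k', l', j) = (\<Sum>m\<in>UNIV. V $ (k, i) $ (k', m) * V $ (l, m) $ (l', j))"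
  by (simp_all add: matrix_matrix_mult_def leg12_def leg13_def leg23_def sum_UNIV_prod
      sum_distrib_left sum_distrib_right if_zero_simps mult_ac)

lemma pentagon_leg12_leg13:
  assumes "multiplicative_unitary V"
  shows "leg12 V ** leg13 V = leg23 V ** leg12 V ** leg23 (adjoint_mat V)"
proof -
  have "leg23 V ** leg23 (adjoint_mat V) = mat 1"
    using multiplicative_unitary_unitary[OF assms]
    by (simp add: unitary_mat_def leg23_mult leg23_mat_1)
  then have "leg12 V ** leg13 V = leg12 V ** leg13 V ** (leg23 V ** leg23 (adjoint_mat V))"
    by simp
  also have "\<dots> = (leg12 V ** leg13 V ** leg23 V) ** leg23 (adjoint_mat V)"
    by (simp only: matrix_mul_assoc)
  finally show ?thesis
    using assms by (simp add: multiplicative_unitary_def)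
qed

lemma pentagon_leg13_leg23:
  assumes "multiplicative_unitary V"
  shows "leg13 V ** leg23 V = leg12 (adjoint_mat V) ** leg23 V ** leg12 V"
proof -
  have "leg12 (adjoint_mat V) ** leg12 V = mat 1"
    using multiplicative_unitary_unitary[OF assms]
    by (simp add: unitary_mat_def leg12_mult leg12_mat_1)
  then have "leg13 V ** leg23 V = (leg12 (adjoint_mat V) ** leg12 V) ** (leg13 V ** leg23 V)"
    by simp
  also have "\<dots> = leg12 (adjoint_mat V) ** (leg12 V ** leg13 V ** leg23 V)"
    by (simp only: matrix_mul_assoc)
  also have "\<dots> = leg12 (adjoint_mat V) ** (leg23 V ** leg12 V)"
    using assms by (simp add: multiplicative_unitary_def)
  finally show ?thesis
    by (simp only: matrix_mul_assoc)
qed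

lemma partial_trace_leg23_cyclic:
  fixes A B :: "complex ^ ('n::finite \<times> 'n) ^ ('n \<times> 'n)" and Y :: "complex ^ ('n \<times> 'n \<times> 'n) ^ ('n \<times> 'n \<times> 'n)"
  shows "(\<Sum>q\<in>UNIV. (leg23 A ** Y ** leg23 B) $ (i, q) $ (j, q))
       = (\<Sum>r\<in>UNIV. \<Sum>s\<in>UNIV. Y $ (i, r) $ (j, s) * (B ** A) $ s $ r)"
proof -
  have "(\<Sum>q\<in>UNIV. (leg23 A ** Y ** leg23 B) $ (i, q) $ (j, q))
      = (\<Sum>q\<in>UNIV. \<Sum>r\<in>UNIV. \<Sum>s\<in>UNIV. A $ q $ r * Y $ (i, r) $ (j, s) * B $ s $ q)"
    unfolding matrix_matrix_mult_def leg23_def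
    by (simp add: sum_UNIV_prod[where 'a = 'n and 'b = "'n \<times> 'n"] sum_distrib_left
        sum_distrib_right if_zero_simps mult_ac) (rule sum.cong[OF refl], rule sum.swap)
  also have "\<dots> = (\<Sum>r\<in>UNIV. \<Sum>s\<in>UNIV. \<Sum>q\<in>UNIV. A $ q $ r * Y $ (i, r) $ (j, s) * B $ s $ q)"
    by (subst sum.swap) (rule sum.cong[OF refl], rule sum.swap)
  also have "\<dots> = (\<Sum>r\<in>UNIV. \<Sum>s\<in>UNIV. Y $ (i, r) $ (j, s) * (B ** A) $ s $ r)"
    by (simp add: matrix_matrix_mult_def sum_distrib_left mult_ac)
  finally show ?thesis .
qed

lemma partial_trace_leg12_cyclic:
  fixes A B :: "complex ^ ('n::finite \<times> 'n) ^ ('n \<times> 'n)" and Y :: "complex ^ ('n \<times> 'n \<times> 'n) ^ ('n \<times> 'n \<times> 'n)"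
  shows "(\<Sum>q\<in>UNIV. (leg12 A ** Y ** leg12 B) $ (fst q, snd q, i) $ (fst q, snd q, j))
       = (\<Sum>r\<in>UNIV. \<Sum>s\<in>UNIV. Y $ (fst r, snd r, i) $ (fst s, snd s, j) * (B ** A) $ s $ r)"
proof -
  have split: "(\<Sum>p\<in>(UNIV :: ('n \<times> 'n \<times> 'n) set). g p) = (\<Sum>r\<in>UNIV. \<Sum>c\<in>UNIV. g (fst r, snd r, c))"
    for g :: "_ \<Rightarrow> complex"
    by (simp add: sum_UNIV_prod)
  have "(\<Sum>q\<in>UNIV. (leg12 A ** Y ** leg12 B) $ (fst q, snd q, i) $ (fst q, snd q, j))
      = (\<Sum>q\<in>UNIV. \<Sum>r\<in>UNIV. \<Sum>s\<in>UNIV. A $ q $ r * Y $ (fst r, snd r, i) $ (fst s, snd s, j) * B $ s $ q)"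
    unfolding matrix_matrix_mult_def leg12_def
    by (simp add: split sum_distrib_left sum_distrib_right if_zero_simps mult_ac)
      (rule sum.cong[OF refl], rule sum.swap)
  also have "\<dots> = (\<Sum>r\<in>UNIV. \<Sum>s\<in>UNIV. \<Sum>q\<in>UNIV. A $ q $ r * Y $ (fst r, snd r, i) $ (fst s, snd s, j) * B $ s $ q)"
    by (subst sum.swap) (rule sum.cong[OF refl], rule sum.swap)
  also have "\<dots> = (\<Sum>r\<in>UNIV. \<Sum>s\<in>UNIV. Y $ (fst r, snd r, i) $ (fst s, snd s, j) * (B ** A) $ s $ r)"
    by (simp add: matrix_matrix_mult_def sum_distrib_left sum_distrib_right mult_ac)
  finally show ?thesis .
qed

lemma sum_mult_mat_1: "(\<Sum>r\<in>UNIV. \<Sum>s\<in>UNIV. g r s * (mat 1 :: complex ^ 'm::finite ^ 'm) $ s $ r) = (\<Sum>r\<in>UNIV. g r r)"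
  by (simp add: mat_def if_zero_simps)

text \<open>The pentagon equation gives \<open>V\<^sub>1\<^sub>2 V\<^sub>1\<^sub>3 = V\<^sub>2\<^sub>3 V\<^sub>1\<^sub>2 V\<^sub>2\<^sub>3\<^sup>*\<close>; tracing out legs 2 and 3
  and using cyclicity, the square of the partial trace becomes the partial trace of \<open>V\<^sub>1\<^sub>2\<close>
  over legs 2 and 3, which is \<open>n\<close> times the partial trace.\<close>

lemma partial_trace2_square:
  fixes V :: "complex ^ ('n::finite \<times> 'n) ^ ('n \<times> 'n)"
  assumes mu: "multiplicative_unitary V"
  shows "(partial_trace2 V ** partial_trace2 V) $ i $ j = of_nat CARD('n) * partial_trace2 V $ i $ j"
proof -
  have "(partial_trace2 V ** partial_trace2 V) $ i $ j
      = (\<Sum>m\<in>UNIV. \<Sum>k\<in>UNIV. \<Sum>l\<in>UNIV. V $ (i, k) $ (m, k) * V $ (m, l) $ (j, l))"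
    by (simp add: partial_trace2_def matrix_matrix_mult_def sum_product)
  also have "\<dots> = (\<Sum>k\<in>UNIV. \<Sum>l\<in>UNIV. \<Sum>m\<in>UNIV. V $ (i, k) $ (m, k) * V $ (m, l) $ (j, l))"
    by (subst sum.swap) (rule sum.cong[OF refl], rule sum.swap)
  also have "\<dots> = (\<Sum>q\<in>UNIV. (leg12 V ** leg13 V) $ (i, q) $ (j, q))"
    by (simp add: sum_UNIV_prod leg12_mult_leg13_apply)
  also have "\<dots> = (\<Sum>q\<in>UNIV. (leg23 V ** leg12 V ** leg23 (adjoint_mat V)) $ (i, q) $ (j, q))"
    by (simp only: pentagon_leg12_leg13[OF mu])
  also have "\<dots> = (\<Sum>r\<in>UNIV. \<Sum>s\<in>UNIV. leg12 V $ (i, r) $ (j, s) * (adjoint_mat V ** V) $ s $ r)"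
    by (rule partial_trace_leg23_cyclic)
  also have "\<dots> = (\<Sum>r\<in>UNIV. leg12 V $ (i, r) $ (j, r))"
    using multiplicative_unitary_unitary[OF mu] by (simp add: unitary_mat_def sum_mult_mat_1)
  also have "\<dots> = of_nat CARD('n) * partial_trace2 V $ i $ j"
    by (simp add: sum_UNIV_prod leg12_def partial_trace2_def sum_distrib_left)
  finally show ?thesis .
qed

lemma partial_trace1_square:
  fixes V :: "complex ^ ('n::finite \<times> 'n) ^ ('n \<times> 'n)"
  assumes mu: "multiplicative_unitary V"
  shows "(partial_trace1 V ** partial_trace1 V) $ i $ j = of_nat CARD('n) * partial_trace1 V $ i $ j"
proof -
  have "(partial_trace1 V ** partial_trace1 V) $ i $ j
      = (\<Sum>m\<in>UNIV. \<Sum>k\<in>UNIV. \<Sum>l\<in>UNIV. V $ (k, i) $ (k, m) * V $ (l, m) $ (l, j))"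
    by (simp add: partial_trace1_def matrix_matrix_mult_def sum_product)
  also have "\<dots> = (\<Sum>k\<in>UNIV. \<Sum>l\<in>UNIV. \<Sum>m\<in>UNIV. V $ (k, i) $ (k, m) * V $ (l, m) $ (l, j))"
    by (subst sum.swap) (rule sum.cong[OF refl], rule sum.swap)
  also have "\<dots> = (\<Sum>q\<in>UNIV. (leg13 V ** leg23 V) $ (fst q, snd q, i) $ (fst q, snd q, j))"
    by (simp add: sum_UNIV_prod leg13_mult_leg23_apply)
  also have "\<dots> = (\<Sum>q\<in>UNIV. (leg12 (adjoint_mat V) ** leg23 V ** leg12 V) $ (fst q, snd q, i) $ (fst q, snd q, j))"
    by (simp only: pentagon_leg13_leg23[OF mu])
  also have "\<dots> = (\<Sum>r\<in>UNIV. \<Sum>s\<in>UNIV. leg23 V $ (fst r, snd r, i) $ (fst s, snd s, j) * (V ** adjoint_mat V) $ s $ r)"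
    by (rule partial_trace_leg12_cyclic)
  also have "\<dots> = (\<Sum>r\<in>UNIV. leg23 V $ (fst r, snd r, i) $ (fst r, snd r, j))"
    using multiplicative_unitary_unitary[OF mu] by (simp add: unitary_mat_def sum_mult_mat_1)
  also have "\<dots> = of_nat CARD('n) * partial_trace1 V $ i $ j"
    by (simp add: sum_UNIV_prod leg23_def partial_trace1_def)
  finally show ?thesis .
qed

lemma matrix_vector_mult_entrywise_scaled:
  assumes "\<And>i j. M $ i $ j = c * N $ i $ j"
  shows "M *v x = c *s (N *v (x :: complex ^ 'n::finite))"
  using assms by (simp add: vec_eq_iff matrix_vector_mult_def sum_distrib_left mult_ac)

lemma norm_axis_1_complex: "norm (axis k (1::complex)) = 1"
  by (simp add: norm_eq_1 inner_axis')

text \<open>Both partial traces are sums of \<open>n\<close> contractions, so on their eigenspace for the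
  eigenvalue \<open>n\<close> every summand acts as the identity.\<close>

lemma fixed_vec_if_partial_trace2_eigen:
  fixes V :: "complex ^ ('n::finite \<times> 'n) ^ ('n \<times> 'n)"
  assumes U: "unitary_mat V" and eigen: "partial_trace2 V *v y = of_nat CARD('n) *s y"
  shows "fixed_vec V y"
proof -
  have "(\<Sum>k\<in>UNIV. slice_right V (axis k 1) y) = real CARD('n) *\<^sub>R y"
    using eigen by (simp add: partial_trace2_eq_sum_slice_right scaleR_vec_eq_smult)
  then have "slice_right V (axis k 1) y = y" for k
    by (rule sum_eq_card_scaleR_imp_eq[rotated 2])
      (simp_all add: norm_slice_right_le[OF U norm_axis_1_complex])
  then have "fixes_tensor V y (axis k 1)" for k
    using slice_right_eq_self_iff[OF U norm_axis_1_complex] by (simp add: fixes_tensor_def)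
  then show ?thesis
    by (simp add: fixed_vec_iff fixes_tensor_basis_right)
qed

lemma cofixed_if_partial_trace1_eigen:
  fixes V :: "complex ^ ('n::finite \<times> 'n) ^ ('n \<times> 'n)"
  assumes U: "unitary_mat V" and eigen: "partial_trace1 V *v y = of_nat CARD('n) *s y"
  shows "fixes_tensor V x y"
proof -
  have "(\<Sum>k\<in>UNIV. slice_left V (axis k 1) y) = real CARD('n) *\<^sub>R y"
    using eigen by (simp add: partial_trace1_eq_sum_slice_left scaleR_vec_eq_smult)
  then have "slice_left V (axis k 1) y = y" for k
    by (rule sum_eq_card_scaleR_imp_eq[rotated 2])
      (simp_all add: norm_slice_left_le[OF U norm_axis_1_complex])
  then have "fixes_tensor V (axis k 1) y" for k
    using slice_left_eq_self_iff[OF U norm_axis_1_complex] by (simp add: fixes_tensor_def)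
  then show ?thesis
    by (rule fixes_tensor_basis_left)
qed

lemma fixed_vec_eq_smult:
  assumes "multiplicity_one V" and "fixed_vec V e" and "e \<noteq> 0" and "fixed_vec V y"
  shows "\<exists>a. y = a *s e"
proof -
  obtain \<xi> where span: "\<And>\<zeta>. fixed_vec V \<zeta> \<Longrightarrow> \<exists>c. \<zeta> = c *s \<xi>"
    using assms(1) unfolding multiplicity_one_def by blast
  obtain a b where "y = a *s \<xi>" "e = b *s \<xi>"
    using span assms(2,4) by blast
  moreover have "b \<noteq> 0"
    using assms(3) \<open>e = b *s \<xi>\<close> by auto
  ultimately have "y = (a / b) *s e"
    by (simp add: vector_smult_assoc)
  then show ?thesis ..
qed

lemma partial_trace2_apply:
  fixes V :: "complex ^ ('n::finite \<times> 'n) ^ ('n \<times> 'n)"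
  assumes mu: "multiplicative_unitary V" and m1: "multiplicity_one V"
    and e: "fixed_vec V e" "norm e = 1"
  shows "partial_trace2 V *v x = (of_nat CARD('n) * cinner x e) *s e"
proof -
  have U: "unitary_mat V"
    using mu by (rule multiplicative_unitary_unitary)
  define y where "y = partial_trace2 V *v x"
  have "partial_trace2 V *v y = (partial_trace2 V ** partial_trace2 V) *v x"
    by (simp add: y_def matrix_vector_mul_assoc)
  also have "\<dots> = of_nat CARD('n) *s y"
    unfolding y_def by (rule matrix_vector_mult_entrywise_scaled) (rule partial_trace2_square[OF mu])
  finally have "fixed_vec V y"
    by (rule fixed_vec_if_partial_trace2_eigen[OF U])
  then obtain a where a: "y = a *s e"
    using fixed_vec_eq_smult[OF m1 e(1)] e(2) by force
  have "cinner y e = (\<Sum>k\<in>UNIV. cinner (slice_right V (axis k 1) x) e)"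
    by (simp add: y_def partial_trace2_eq_sum_slice_right cinner_sum_left)
  also have "\<dots> = (\<Sum>k\<in>(UNIV :: 'n set). cinner x e)"
    using e(1) by (intro sum.cong refl cinner_slice_right_fixed norm_axis_1_complex
        unitary_fixed_adjoint[OF U]) (simp add: fixed_vec_def)
  finally have "a = of_nat CARD('n) * cinner x e"
    using e(2) by (simp add: a cinner_smult_left cinner_self)
  then show ?thesis
    by (simp add: y_def [symmetric] a)
qed

lemma cofixed_vector_exists:
  fixes V :: "complex ^ ('n::finite \<times> 'n) ^ ('n \<times> 'n)"
  assumes mu: "multiplicative_unitary V" and m1: "multiplicity_one V"
    and e: "fixed_vec V e" "norm e = 1"
  shows "\<exists>c. norm c = 1 \<and> (\<forall>x. fixes_tensor V x c)"
proof -
  have "(\<Sum>i\<in>UNIV. partial_trace1 V $ i $ i) = (\<Sum>i\<in>UNIV. (partial_trace2 V *v axis i 1) $ i)"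
    by (simp add: trace_partial_trace2_eq [symmetric] matrix_vector_mult_def axis_def if_zero_simps)
  also have "\<dots> = of_nat CARD('n) * cinner e e"
    by (simp add: partial_trace2_apply[OF mu m1 e] cinner_def sum_distrib_left mult_ac
        flip: cnj_cinner)
      (simp add: axis_def cinner_def if_zero_simps)
  finally have "(\<Sum>i\<in>UNIV. partial_trace1 V $ i $ i) \<noteq> 0"
    using e(2) by (simp add: cinner_self)
  then obtain i where "partial_trace1 V $ i $ i \<noteq> 0"
    by (meson sum.neutral)
  define c where "c = partial_trace1 V *v axis i 1"
  have "c $ i \<noteq> 0"
    using \<open>partial_trace1 V $ i $ i \<noteq> 0\<close>
    by (simp add: c_def matrix_vector_mult_def axis_def if_zero_simps)
  have "partial_trace1 V *v c = (partial_trace1 V ** partial_trace1 V) *v axis i 1"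
    by (simp add: c_def matrix_vector_mul_assoc)
  also have "\<dots> = of_nat CARD('n) *s c"
    unfolding c_def by (rule matrix_vector_mult_entrywise_scaled) (rule partial_trace1_square[OF mu])
  finally have "fixes_tensor V x c" for x
    by (rule cofixed_if_partial_trace1_eigen[OF multiplicative_unitary_unitary[OF mu]])
  moreover have "c \<noteq> 0"
    using \<open>c $ i \<noteq> 0\<close> by auto
  ultimately show ?thesis
    using norm_normalize fixes_tensor_smult_right by blast
qed

text \<open>If \<open>c\<close> were orthogonal to \<open>e\<close>, the orthogonal projection \<open>slice_left V c\<close> would have trace
  \<open>\<langle>partial_trace2 V c, c\<rangle> = 0\<close> and hence vanish, contradicting that it fixes \<open>c\<close>.\<close>

lemma cinner_cofixed_fixed_neq_0:
  fixes V :: "complex ^ ('n::finite \<times> 'n) ^ ('n \<times> 'n)"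
  assumes mu: "multiplicative_unitary V" and m1: "multiplicity_one V"
    and e: "fixed_vec V e" "norm e = 1"
    and c: "norm c = 1" "\<And>x. fixes_tensor V x c"
  shows "cinner c e \<noteq> 0"
proof
  assume ce: "cinner c e = 0"
  have U: "unitary_mat V"
    using mu by (rule multiplicative_unitary_unitary)
  let ?P = "slice_left V c"
  have "inner (?P b) (b - ?P b) = 0" for b
    using inner_idempotent_contraction[OF linear_slice_left slice_left_idem[OF mu c(2) c(1)]
        norm_slice_left_le[OF U c(1)]] .
  then have proj: "inner (?P b) b = (norm (?P b))\<^sup>2" for b
    by (simp add: inner_diff_right power2_norm_eq_inner)
  have "(\<Sum>k\<in>UNIV. cinner (?P (axis k 1)) (axis k 1)) = cinner (partial_trace2 V *v c) c"
    by (simp add: cinner_slice_left cinner_slice_right partial_trace2_eq_sum_slice_right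
        cinner_sum_left)
  also have "\<dots> = 0"
    by (simp add: partial_trace2_apply[OF mu m1 e] cinner_smult_left ce)
  finally have "Re (\<Sum>k\<in>UNIV. cinner (?P (axis k 1)) (axis k 1)) = 0"
    by simp
  then have "(\<Sum>k\<in>UNIV. (norm (?P (axis k 1)))\<^sup>2) = 0"
    by (simp add: Re_cinner proj)
  then have "?P (axis k 1) = 0" for k
    by (simp add: sum_nonneg_eq_0_iff)
  then have "?P (\<Sum>k\<in>UNIV. c $ k *s axis k 1) = 0"
    by (simp add: slice_left_sum slice_left_smult)
  then have "?P c = 0"
    by (simp only: basis_expansion)
  moreover have "?P c = c"
    using slice_left_eq_self_iff[OF U c(1)] c(2) by (simp add: fixes_tensor_def)
  ultimately show False
    using c(1) by simp
qed

section \<open>Intersections of the spaces \<open>H\<^sup>f\<close> and \<open>H\<^sub>f\<close>\<close>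

lemma subspace_fixes_tensor_left: "subspace {x. \<forall>\<eta>\<in>K. fixes_tensor V x \<eta>}"
  and subspace_fixes_tensor_right: "subspace {x. \<forall>\<eta>\<in>K. fixes_tensor V \<eta> x}"
  by (simp_all add: subspace_def fixes_tensor_zero_left fixes_tensor_zero_right
      fixes_tensor_add_left fixes_tensor_add_right scaleR_vec_eq_smult fixes_tensor_smult_left
      fixes_tensor_smult_right)

lemma cinner_eq_if_diff_in_range:
  assumes "s - s0 \<in> range (\<lambda>x. (P x - x) + (Q x - x))"
    and "\<And>x. cinner (P x) y = cinner x y" and "\<And>x. cinner (Q x) y = cinner x y"
  shows "cinner s0 y = cinner s y"
proof -
  obtain x where "s - s0 = (P x - x) + (Q x - x)"
    using assms(1) by blast
  then have "cinner (s - s0) y = 0"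
    by (simp only: cinner_add_left cinner_diff_left assms(2,3)) simp
  then show ?thesis
    by (simp add: cinner_diff_left)
qed

lemma pre_subgroup_normalize:
  assumes "fixes_tensor V s s" and "cinner s e = of_real r" and "r > 0"
  shows "pre_subgroup V e (of_real (1 / norm s) *s s)"
proof -
  have "s \<noteq> 0"
    using assms(2,3) by auto
  then have "norm ((of_real (1 / norm s) :: complex) *s s) = 1"
    by (rule norm_normalize)
  then show ?thesis
    using assms \<open>s \<noteq> 0\<close> by (simp add: pre_subgroup_def cinner_smult_left tensor_smult_left
        tensor_smult_right matrix_vector_smult fixes_tensor_def)
qed

lemma Hup_inter_eq_Hup:
  fixes V :: "complex ^ ('n::finite \<times> 'n) ^ ('n \<times> 'n)"
  assumes mu: "multiplicative_unitary V" and m1: "multiplicity_one V"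
    and e: "fixed_vec V e" "norm e = 1"
    and f: "pre_subgroup V e f" and f': "pre_subgroup V e f'"
  shows "\<exists>g. pre_subgroup V e g \<and> Hup V f \<inter> Hup V f' = Hup V g"
proof -
  have U: "unitary_mat V"
    using mu by (rule multiplicative_unitary_unitary)
  have nf: "norm f = 1" "norm f' = 1"
    using f f' by (simp_all add: pre_subgroup_def)
  define K where "K = Hup V f \<inter> Hup V f'"
  define L where "L = {x. \<forall>\<eta>\<in>K. fixes_tensor V x \<eta>}"
  have "subspace L"
    unfolding L_def by (rule subspace_fixes_tensor_left)
  moreover have "slice_left V f x \<in> L" "slice_left V f' x \<in> L" if "x \<in> L" for x
    using that by (auto simp: L_def K_def Hup_eq intro: fixes_tensor_slice_left[OF mu])
  moreover have "e \<in> L"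
    using e(1) by (simp add: L_def fixed_vec_iff)
  ultimately obtain s where "s \<in> L" and fixed: "slice_left V f s = s" "slice_left V f' s = s"
    and diff: "e - s \<in> range (\<lambda>x. (slice_left V f x - x) + (slice_left V f' x - x))"
    using common_fixed_point_of_contractions[OF linear_slice_left linear_slice_left
        norm_slice_left_le[OF U nf(1)] norm_slice_left_le[OF U nf(2)]] by blast
  have "s \<in> K"
    using fixed by (simp add: K_def Hup_eq fixes_tensor_def slice_left_eq_self_iff[OF U] nf)
  have cinner_s: "cinner s y = cinner e y" if "y \<in> K" for y
    using diff by (rule cinner_eq_if_diff_in_range)
      (use that nf in \<open>auto simp: K_def Hup_eq fixes_tensor_def
        intro!: cinner_slice_left_fixed unitary_fixed_adjoint[OF U]\<close>)
  obtain c where c: "norm c = 1" "\<And>x. fixes_tensor V x c"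
    using cofixed_vector_exists[OF mu m1 e] by blast
  then have "cinner s c = cnj (cinner c e)"
    by (simp add: cinner_s K_def Hup_eq cnj_cinner)
  then have "s \<noteq> 0"
    using cinner_cofixed_fixed_neq_0[OF mu m1 e c] by auto
  define g where "g = (of_real (1 / norm s) :: complex) *s s"
  have "cinner s e = cnj (cinner s s)"
    using cinner_s[OF \<open>s \<in> K\<close>] by (simp add: cnj_cinner)
  then have "cinner s e = of_real ((norm s)\<^sup>2)"
    by (simp add: cinner_self)
  moreover have "fixes_tensor V s s"
    using \<open>s \<in> K\<close> \<open>s \<in> L\<close> by (simp add: L_def)
  ultimately have "pre_subgroup V e g"
    using \<open>s \<noteq> 0\<close> unfolding g_def by (intro pre_subgroup_normalize[where r = "(norm s)\<^sup>2"]) auto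
  have "g \<in> K" "g \<in> L" "g \<noteq> 0"
    using \<open>s \<in> K\<close> \<open>s \<in> L\<close> \<open>s \<noteq> 0\<close>
    by (auto simp: g_def K_def L_def Hup_eq fixes_tensor_smult_left fixes_tensor_smult_right)
  have "K = Hup V g"
  proof
    show "K \<subseteq> Hup V g"
      using \<open>g \<in> L\<close> by (auto simp: L_def Hup_eq)
    show "Hup V g \<subseteq> K"
      using \<open>g \<in> K\<close> \<open>g \<noteq> 0\<close> fixes_tensor_trans[OF mu] by (auto simp: K_def Hup_eq)
  qed
  with \<open>pre_subgroup V e g\<close> show ?thesis
    unfolding K_def by blast
qed

lemma Hlow_inter_eq_Hlow:
  fixes V :: "complex ^ ('n::finite \<times> 'n) ^ ('n \<times> 'n)"
  assumes mu: "multiplicative_unitary V" and e: "fixed_vec V e"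
    and f: "pre_subgroup V e f" and f': "pre_subgroup V e f'"
  shows "\<exists>g. pre_subgroup V e g \<and> Hlow V f \<inter> Hlow V f' = Hlow V g"
proof -
  have U: "unitary_mat (adjoint_mat V)"
    using mu by (intro unitary_adjoint multiplicative_unitary_unitary)
  have nf: "norm f = 1" "norm f' = 1"
    using f f' by (simp_all add: pre_subgroup_def)
  define K where "K = Hlow V f \<inter> Hlow V f'"
  define L where "L = {x. \<forall>\<eta>\<in>K. fixes_tensor V \<eta> x}"
  have "subspace L"
    unfolding L_def by (rule subspace_fixes_tensor_right)
  moreover have "slice_right (adjoint_mat V) f x \<in> L" "slice_right (adjoint_mat V) f' x \<in> L"
    if "x \<in> L" for x
    using that by (auto simp: L_def K_def Hlow_eq intro: fixes_tensor_slice_right[OF mu])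
  moreover have "f \<in> L"
    by (simp add: L_def K_def Hlow_eq)
  ultimately obtain s where "s \<in> L"
    and fixed: "slice_right (adjoint_mat V) f s = s" "slice_right (adjoint_mat V) f' s = s"
    and diff: "f - s \<in> range (\<lambda>x. (slice_right (adjoint_mat V) f x - x)
                                + (slice_right (adjoint_mat V) f' x - x))"
    using common_fixed_point_of_contractions[OF linear_slice_right linear_slice_right
        norm_slice_right_le[OF U nf(1)] norm_slice_right_le[OF U nf(2)]] by blast
  have "s \<in> K"
    using fixed unitary_fixed_adjoint[OF U]
    by (simp add: K_def Hlow_eq fixes_tensor_def slice_right_eq_self_iff[OF U] nf)
  have "cinner s e = cinner f e"
    using diff by (rule cinner_eq_if_diff_in_range)
      (use e nf in \<open>auto simp: fixed_vec_def intro!: cinner_slice_right_fixed\<close>)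
  then have "cinner s e = of_real (Re (cinner f e))" and "Re (cinner f e) > 0"
    using f by (simp_all add: pre_subgroup_def complex_eq_iff)
  then have "s \<noteq> 0"
    by auto
  define g where "g = (of_real (1 / norm s) :: complex) *s s"
  have "fixes_tensor V s s"
    using \<open>s \<in> K\<close> \<open>s \<in> L\<close> by (simp add: L_def)
  then have "pre_subgroup V e g"
    unfolding g_def
    by (rule pre_subgroup_normalize) fact+
  have "g \<in> K" "g \<in> L" "g \<noteq> 0"
    using \<open>s \<in> K\<close> \<open>s \<in> L\<close> \<open>s \<noteq> 0\<close>
    by (auto simp: g_def K_def L_def Hlow_eq fixes_tensor_smult_left fixes_tensor_smult_right)
  have "K = Hlow V g"
  proof
    show "K \<subseteq> Hlow V g"
      using \<open>g \<in> L\<close> by (auto simp: L_def Hlow_eq)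
    show "Hlow V g \<subseteq> K"
      using \<open>g \<in> K\<close> \<open>g \<noteq> 0\<close> fixes_tensor_trans[OF mu] by (auto simp: K_def Hlow_eq)
  qed
  with \<open>pre_subgroup V e g\<close> show ?thesis
    unfolding K_def by blast
qed

theorem corollary3p14:
  fixes V :: "complex ^ ('n::finite \<times> 'n) ^ ('n \<times> 'n)" and e f f' :: "complex ^ 'n"
  assumes "multiplicative_unitary V"
    and "multiplicity_one V"
    and "fixed_vec V e" and "norm e = 1"
    and "pre_subgroup V e f" and "pre_subgroup V e f'"
  shows "\<exists>g g'. pre_subgroup V e g \<and> pre_subgroup V e g' \<and>
           Hup V f \<inter> Hup V f' = Hup V g \<and> Hlow V f \<inter> Hlow V f' = Hlow V g' \<and>
           prec V g f \<and> prec V g f' \<and>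
           (\<forall>h. pre_subgroup V e h \<and> prec V h f \<and> prec V h f' \<longrightarrow> prec V h g) \<and>
           prec V f g' \<and> prec V f' g' \<and>
           (\<forall>h. pre_subgroup V e h \<and> prec V f h \<and> prec V f' h \<longrightarrow> prec V g' h)"
proof -
  obtain g where g: "pre_subgroup V e g" and Hup: "Hup V f \<inter> Hup V f' = Hup V g"
    using Hup_inter_eq_Hup[OF assms] by blast
  obtain g' where g': "pre_subgroup V e g'" and Hlow: "Hlow V f \<inter> Hlow V f' = Hlow V g'"
    using Hlow_inter_eq_Hlow[OF assms(1,3,5,6)] by blast
  have "fixes_tensor V f h \<and> fixes_tensor V f' h \<longleftrightarrow> fixes_tensor V g h" for h
    using Hup by (simp add: Hup_eq set_eq_iff)
  moreover have "fixes_tensor V h f \<and> fixes_tensor V h f' \<longleftrightarrow> fixes_tensor V h g'" for h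
    using Hlow by (simp add: Hlow_eq set_eq_iff)
  moreover have "fixes_tensor V g g" "fixes_tensor V g' g'"
    using g g' by (simp_all add: pre_subgroup_def fixes_tensor_def)
  ultimately show ?thesis
    using g g' Hup Hlow by (auto simp: prec_iff)
qed

end
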